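(* Let $U:\mathbb{C}^*\to\mathbb{C}$ be a reasonable expansion with unique restrictions, between locally small categories, which has the expansion property. Assume that all morphisms in $\mathbb{C}$ are monomorphisms and that $\mathbb{C}^*$ is directed. Let $A\in\mathrm{Ob}(\mathbb{C})$, let $\mathcal{A}_1,\dots,\mathcal{A}_n\in U^{-1}(A)$ be distinct, and assume $t_i=t_{\mathbb{C}^*}(\mathcal{A}_i)\in\mathbb{N}$ for $i\in\{1,\dots,n\}$. Then $t_{\mathbb{C}}(A)\ge\sum_{i=1}^n t_i$.
   Context: Write $X\to Y$ if $\hom(X,Y)\ne\varnothing$; a category is directed if for all objects $A,B$ there is $C$ with $A\to C$, $B\to C$. An expansion of $\mathbb{C}$ is a category $\mathbb{C}^*$ with a functor $U:\mathbb{C}^*\to\mathbb{C}$ surjective on objects and injective on hom-sets; we regard $\hom_{\mathbb{C}^*}(\mathcal{A},\mathcal{B})\subseteq\hom_{\mathbb{C}}(U\mathcal{A},U\mathcal{B})$, and $U^{-1}(A)=\{\mathcal{A}:U(\mathcal{A})=A\}$. $U$ is reasonable if for every $e\in\hom(A,B)$ and $\mathcal{A}\in U^{-1}(A)$ there is $\mathcal{B}\in U^{-1}(B)$ with $e\in\hom(\mathcal{A},\mathcal{B})$; it has unique restrictions if for every $\mathcal{B}$ and $e\in\hom(A,U(\mathcal{B}))$ there is exactly one $\mathcal{A}\in U^{-1}(A)$ with $e\in\hom(\mathcal{A},\mathcal{B})$; it has the expansion property if for every $A\in\mathrm{Ob}(\mathbb{C})$ there is $B\in\mathrm{Ob}(\mathbb{C})$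 with $\mathcal{A}\to\mathcal{B}$ for all $\mathcal{A}\in U^{-1}(A)$, $\mathcal{B}\in U^{-1}(B)$. In a category $\mathbb{D}$: $C\to(B)^A_{k,t}$ means that for every $\chi:\hom(A,C)\to\{0,\dots,k-1\}$ there is $w\in\hom(B,C)$ with $|\chi(w\cdot\hom(A,B))|\le t$; $t_{\mathbb{D}}(A)$ is the least positive $n$ such that for all $k\ge2$ and all $B$ there is $C$ with $C\to(B)^A_{k,n}$, and $\infty$ otherwise. *)

theory Defs
  imports Main "HOL-Library.Extended_Nat"
begin

text \<open>A (locally small) category is presented by an object set Ob, hom-sets Hom A B,
  a composition cmp g f (g after f) and identities idm A.\<close>
definition category ::
  "'o set \<Rightarrow> ('o \<Rightarrow> 'o \<Rightarrow> 'm set) \<Rightarrow> ('m \<Rightarrow> 'm \<Rightarrow> 'm) \<Rightarrow> ('o \<Rightarrow> 'm) \<Rightarrow> bool" where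
  "category Ob Hom cmp idm \<longleftrightarrow>
     (\<forall>A\<in>Ob. idm A \<in> Hom A A) \<and>
     (\<forall>A\<in>Ob. \<forall>B\<in>Ob. \<forall>C\<in>Ob. \<forall>f g. f \<in> Hom A B \<longrightarrow> g \<in> Hom B C \<longrightarrow> cmp g f \<in> Hom A C) \<and>
     (\<forall>A\<in>Ob. \<forall>B\<in>Ob. \<forall>f \<in> Hom A B. cmp (idm B) f = f \<and> cmp f (idm A) = f) \<and>
     (\<forall>A\<in>Ob. \<forall>B\<in>Ob. \<forall>C\<in>Ob. \<forall>D\<in>Ob. \<forall>f g h. f \<in> Hom A B \<longrightarrow> g \<in> Hom B C \<longrightarrow> h \<in> Hom C D \<longrightarrow>
        cmp h (cmp g f) = cmp (cmp h g) f)"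

definition all_mono ::
  "'o set \<Rightarrow> ('o \<Rightarrow> 'o \<Rightarrow> 'm set) \<Rightarrow> ('m \<Rightarrow> 'm \<Rightarrow> 'm) \<Rightarrow> bool" where
  "all_mono Ob Hom cmp \<longleftrightarrow>
     (\<forall>X\<in>Ob. \<forall>A\<in>Ob. \<forall>B\<in>Ob. \<forall>f\<in>Hom A B. \<forall>g\<in>Hom X A. \<forall>h\<in>Hom X A.
        cmp f g = cmp f h \<longrightarrow> g = h)"

definition directed :: "'o set \<Rightarrow> ('o \<Rightarrow> 'o \<Rightarrow> 'm set) \<Rightarrow> bool" where
  "directed Ob Hom \<longleftrightarrow> (\<forall>A\<in>Ob. \<forall>B\<in>Ob. \<exists>C\<in>Ob. Hom A C \<noteq> {} \<and> Hom B C \<noteq> {})"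

text \<open>An expansion U of the category (Ob, Hom, cmp, idm): the expanded category has objects
  ObS, hom-sets HomS P Q regarded as subsets of Hom (U P) (U Q), with the composition and
  identities inherited from the base category (U acts as the inclusion on morphisms, so U is
  a functor injective on hom-sets); U is surjective on objects.\<close>
definition expansion ::
  "'o set \<Rightarrow> ('o \<Rightarrow> 'o \<Rightarrow> 'm set) \<Rightarrow> ('m \<Rightarrow> 'm \<Rightarrow> 'm) \<Rightarrow> ('o \<Rightarrow> 'm) \<Rightarrow>
   'p set \<Rightarrow> ('p \<Rightarrow> 'p \<Rightarrow> 'm set) \<Rightarrow> ('p \<Rightarrow> 'o) \<Rightarrow> bool" where
  "expansion Ob Hom cmp idm ObS HomS U \<longleftrightarrow>
     category Ob Hom cmp idm \<and>
     category ObS HomS cmp (\<lambda>P. idm (U P)) \<and>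
     U ` ObS = Ob \<and>
     (\<forall>P\<in>ObS. \<forall>Q\<in>ObS. HomS P Q \<subseteq> Hom (U P) (U Q))"

definition reasonable ::
  "'o set \<Rightarrow> ('o \<Rightarrow> 'o \<Rightarrow> 'm set) \<Rightarrow> 'p set \<Rightarrow> ('p \<Rightarrow> 'p \<Rightarrow> 'm set) \<Rightarrow> ('p \<Rightarrow> 'o) \<Rightarrow> bool" where
  "reasonable Ob Hom ObS HomS U \<longleftrightarrow>
     (\<forall>A\<in>Ob. \<forall>B\<in>Ob. \<forall>e\<in>Hom A B. \<forall>P\<in>ObS. U P = A \<longrightarrow>
        (\<exists>Q\<in>ObS. U Q = B \<and> e \<in> HomS P Q))"

definition unique_restrictions ::
  "'o set \<Rightarrow> ('o \<Rightarrow> 'o \<Rightarrow> 'm set) \<Rightarrow> 'p set \<Rightarrow> ('p \<Rightarrow> 'p \<Rightarrow> 'm set) \<Rightarrow> ('p \<Rightarrow> 'o) \<Rightarrow> bool" where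
  "unique_restrictions Ob Hom ObS HomS U \<longleftrightarrow>
     (\<forall>Q\<in>ObS. \<forall>A\<in>Ob. \<forall>e\<in>Hom A (U Q).
        (\<exists>!P. P \<in> ObS \<and> U P = A \<and> e \<in> HomS P Q))"

definition expansion_property ::
  "'o set \<Rightarrow> 'p set \<Rightarrow> ('p \<Rightarrow> 'p \<Rightarrow> 'm set) \<Rightarrow> ('p \<Rightarrow> 'o) \<Rightarrow> bool" where
  "expansion_property Ob ObS HomS U \<longleftrightarrow>
     (\<forall>A\<in>Ob. \<exists>B\<in>Ob. \<forall>P\<in>ObS. \<forall>Q\<in>ObS. U P = A \<longrightarrow> U Q = B \<longrightarrow> HomS P Q \<noteq> {})"

text \<open>C \<rightarrow> (B)^A_{k,t}: every colouring of hom(A,C) with k colours admits w in hom(B,C) such that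
  w \<cdot> hom(A,B) takes at most t colours.\<close>
definition ramsey_arrow ::
  "('o \<Rightarrow> 'o \<Rightarrow> 'm set) \<Rightarrow> ('m \<Rightarrow> 'm \<Rightarrow> 'm) \<Rightarrow> 'o \<Rightarrow> 'o \<Rightarrow> 'o \<Rightarrow> nat \<Rightarrow> nat \<Rightarrow> bool" where
  "ramsey_arrow Hom cmp C B A k t \<longleftrightarrow>
     (\<forall>\<chi> :: 'm \<Rightarrow> nat. (\<forall>f\<in>Hom A C. \<chi> f < k) \<longrightarrow>
        (\<exists>w\<in>Hom B C. card (\<chi> ` ((\<lambda>f. cmp w f) ` Hom A B)) \<le> t))"

definition ramsey_property_deg ::
  "'o set \<Rightarrow> ('o \<Rightarrow> 'o \<Rightarrow> 'm set) \<Rightarrow> ('m \<Rightarrow> 'm \<Rightarrow> 'm) \<Rightarrow> 'o \<Rightarrow> nat \<Rightarrow> bool" where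
  "ramsey_property_deg Ob Hom cmp A n \<longleftrightarrow>
     (\<forall>k\<ge>2. \<forall>B\<in>Ob. \<exists>C\<in>Ob. ramsey_arrow Hom cmp C B A k n)"

definition small_ramsey_degree ::
  "'o set \<Rightarrow> ('o \<Rightarrow> 'o \<Rightarrow> 'm set) \<Rightarrow> ('m \<Rightarrow> 'm \<Rightarrow> 'm) \<Rightarrow> 'o \<Rightarrow> enat" where
  "small_ramsey_degree Ob Hom cmp A =
     (if \<exists>n>0. ramsey_property_deg Ob Hom cmp A n
      then enat (LEAST n. n > 0 \<and> ramsey_property_deg Ob Hom cmp A n)
      else \<infinity>)"

end

theory Submission
  imports Defs
begin

text \<open>
  If the small Ramsey degree of an expanded object P is t, then t - 1 fails for some B and k:
  every C carries a k-colouring of hom(P, C) under which each copy of B sees at least t colours.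
  Directedness of the expanded category lets one object B serve all the \<A>_i at once. The
  expansion property gives D such that every copy w of D in C = U(C*) restricts to a morphism
  D* \<rightarrow> C* which contains a copy v of B. Colour e \<in> hom(A, C) whose unique restriction is
  \<A>_i by the pair (i, colour of e in the i-th colouring). A copy w of D on which only t
  colours occur contains v \<cdot> hom(\<A>_i, B) for every i, which shows at least t_i colours
  with first component i; summing over the disjoint classes gives the bound.
\<close>

lemma category_comp_closed:
  assumes "category Ob Hom cmp idm" "A \<in> Ob" "B \<in> Ob" "C \<in> Ob" "f \<in> Hom A B" "g \<in> Hom B C"
  shows "cmp g f \<in> Hom A C"
  using assms unfolding category_def by blast

lemma category_assoc:
  assumes "category Ob Hom cmp idm" "A \<in> Ob" "B \<in> Ob" "C \<in> Ob" "D \<in> Ob"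
    and "f \<in> Hom A B" "g \<in> Hom B C" "h \<in> Hom C D"
  shows "cmp h (cmp g f) = cmp (cmp h g) f"
  using assms unfolding category_def by blast

lemma category_id_closed:
  assumes "category Ob Hom cmp idm" "A \<in> Ob"
  shows "idm A \<in> Hom A A"
  using assms unfolding category_def by blast

lemma directed_finite_upper_bound:
  assumes cat: "category Ob Hom cmp idm" and dir: "directed Ob Hom" and "Ob \<noteq> {}"
    and "finite I" and "B ` I \<subseteq> Ob"
  obtains C where "C \<in> Ob" "\<forall>i\<in>I. Hom (B i) C \<noteq> {}"
proof -
  from \<open>finite I\<close> \<open>B ` I \<subseteq> Ob\<close> have "\<exists>C\<in>Ob. \<forall>i\<in>I. Hom (B i) C \<noteq> {}"
  proof (induction I rule: finite_induct)
    case empty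
    then show ?case using \<open>Ob \<noteq> {}\<close> by auto
  next
    case (insert j I)
    then obtain C where C: "C \<in> Ob" and to_C: "\<forall>i\<in>I. Hom (B i) C \<noteq> {}" by auto
    from dir C insert.prems obtain C' where C': "C' \<in> Ob"
      and "Hom (B j) C' \<noteq> {}" and "Hom C C' \<noteq> {}"
      unfolding directed_def by blast
    moreover have "Hom (B i) C' \<noteq> {}" if i: "i \<in> I" for i
    proof -
      from to_C i obtain f where "f \<in> Hom (B i) C" by blast
      moreover from \<open>Hom C C' \<noteq> {}\<close> obtain g where "g \<in> Hom C C'" by blast
      moreover have "B i \<in> Ob" using insert.prems i by blast
      ultimately show ?thesis using category_comp_closed[OF cat _ C C'] by blast
    qed
    ultimately show ?case by blast
  qed
  then show thesis using that by blast
qed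

text \<open>For t > 0 this says that no C satisfies C \<rightarrow> (B)^A_{k,t-1}, so B and k witness that
  the small Ramsey degree of A is at least t.\<close>
definition ramsey_obstruction ::
  "'o set \<Rightarrow> ('o \<Rightarrow> 'o \<Rightarrow> 'm set) \<Rightarrow> ('m \<Rightarrow> 'm \<Rightarrow> 'm) \<Rightarrow> 'o \<Rightarrow> nat \<Rightarrow> nat \<Rightarrow> 'o \<Rightarrow> bool" where
  "ramsey_obstruction Ob Hom cmp A k t B \<longleftrightarrow>
     (\<forall>C\<in>Ob. \<exists>\<chi> :: 'm \<Rightarrow> nat. (\<forall>f\<in>Hom A C. \<chi> f < k) \<and>
        (\<forall>w\<in>Hom B C. t \<le> card (\<chi> ` cmp w ` Hom A B)))"

lemma ramsey_obstruction_if_small_ramsey_degree: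
  fixes Hom :: "'o \<Rightarrow> 'o \<Rightarrow> 'm set"
  assumes cat: "category Ob Hom cmp idm" and A: "A \<in> Ob"
    and deg: "small_ramsey_degree Ob Hom cmp A = enat t"
  obtains k B where "B \<in> Ob" "ramsey_obstruction Ob Hom cmp A k t B"
proof -
  have ex: "\<exists>n>0. ramsey_property_deg Ob Hom cmp A n"
    using deg unfolding small_ramsey_degree_def by (auto split: if_splits)
  then have t: "t = (LEAST n. n > 0 \<and> ramsey_property_deg Ob Hom cmp A n)"
    using deg unfolding small_ramsey_degree_def by auto
  have "t > 0" using LeastI_ex[OF ex] t by simp
  consider "t = 1" | "t > 1" using \<open>t > 0\<close> by linarith
  then show thesis
  proof cases
    case 1
    have "(\<lambda>_. 0::nat) ` cmp w ` Hom A A = {0}" for w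
      using category_id_closed[OF cat A] by blast
    then have "ramsey_obstruction Ob Hom cmp A 1 t A"
      unfolding ramsey_obstruction_def using 1 by (intro ballI exI[of _ "\<lambda>_. 0"]) simp
    with A that show thesis by blast
  next
    case 2
    then have "\<not> ramsey_property_deg Ob Hom cmp A (t - 1)"
      using not_less_Least[of "t - 1" "\<lambda>n. n > 0 \<and> ramsey_property_deg Ob Hom cmp A n"] t
      by auto
    then obtain k B where "B \<in> Ob" and "\<forall>C\<in>Ob. \<not> ramsey_arrow Hom cmp C B A k (t - 1)"
      unfolding ramsey_property_deg_def by blast
    then have "\<forall>C\<in>Ob. \<exists>\<chi> :: 'm \<Rightarrow> nat. (\<forall>f\<in>Hom A C. \<chi> f < k) \<and>
        (\<forall>w\<in>Hom B C. t - 1 < card (\<chi> ` cmp w ` Hom A B))"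
      unfolding ramsey_arrow_def by (simp add: not_le)
    moreover have "t - 1 < c \<longleftrightarrow> t \<le> c" for c using \<open>t > 0\<close> by linarith
    ultimately have "ramsey_obstruction Ob Hom cmp A k t B"
      unfolding ramsey_obstruction_def by simp
    with \<open>B \<in> Ob\<close> that show thesis by blast
  qed
qed

lemma ramsey_obstruction_mono:
  fixes Hom :: "'o \<Rightarrow> 'o \<Rightarrow> 'm set"
  assumes cat: "category Ob Hom cmp idm" and A: "A \<in> Ob" and B: "B \<in> Ob" and B': "B' \<in> Ob"
    and h: "h \<in> Hom B B'" and obs: "ramsey_obstruction Ob Hom cmp A k t B"
  shows "ramsey_obstruction Ob Hom cmp A k t B'"
  unfolding ramsey_obstruction_def
proof
  fix C assume C: "C \<in> Ob"
  with obs obtain \<chi> :: "'m \<Rightarrow> nat" where bounded: "\<forall>f\<in>Hom A C. \<chi> f < k"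
    and many: "\<forall>w\<in>Hom B C. t \<le> card (\<chi> ` cmp w ` Hom A B)"
    unfolding ramsey_obstruction_def by auto
  have "t \<le> card (\<chi> ` cmp w ` Hom A B')" if w: "w \<in> Hom B' C" for w
  proof -
    have "cmp (cmp w h) f \<in> cmp w ` Hom A B'" if "f \<in> Hom A B" for f
      using category_assoc[OF cat A B B' C that h w] category_comp_closed[OF cat A B B' that h]
      by (metis image_eqI)
    then have "\<chi> ` cmp (cmp w h) ` Hom A B \<subseteq> \<chi> ` cmp w ` Hom A B'" by blast
    moreover have "finite (\<chi> ` cmp w ` Hom A B')"
      using bounded category_comp_closed[OF cat A B' C _ w]
      by (auto intro: finite_subset[OF _ finite_lessThan[of k]])
    ultimately have "card (\<chi> ` cmp (cmp w h) ` Hom A B) \<le> card (\<chi> ` cmp w ` Hom A B')"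
      by (rule card_mono[rotated])
    then show ?thesis
      using many category_comp_closed[OF cat B B' C h w] by fastforce
  qed
  with bounded show "\<exists>\<chi> :: 'm \<Rightarrow> nat. (\<forall>f\<in>Hom A C. \<chi> f < k) \<and>
      (\<forall>w\<in>Hom B' C. t \<le> card (\<chi> ` cmp w ` Hom A B'))" by blast
qed

lemma common_ramsey_obstruction:
  fixes Hom :: "'o \<Rightarrow> 'o \<Rightarrow> 'm set" and A :: "'i \<Rightarrow> 'o"
  assumes cat: "category Ob Hom cmp idm" and dir: "directed Ob Hom" and "Ob \<noteq> {}"
    and "finite I" and A: "\<forall>i\<in>I. A i \<in> Ob \<and> small_ramsey_degree Ob Hom cmp (A i) = enat (t i)"
  obtains k B where "B \<in> Ob" "\<forall>i\<in>I. ramsey_obstruction Ob Hom cmp (A i) (k i) (t i) B"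
proof -
  have "\<exists>k B. B \<in> Ob \<and> ramsey_obstruction Ob Hom cmp (A i) k (t i) B" if "i \<in> I" for i
  proof -
    from A that have "A i \<in> Ob" "small_ramsey_degree Ob Hom cmp (A i) = enat (t i)" by auto
    then obtain k B where "B \<in> Ob" "ramsey_obstruction Ob Hom cmp (A i) k (t i) B"
      by (rule ramsey_obstruction_if_small_ramsey_degree[OF cat])
    then show ?thesis by blast
  qed
  then obtain k B where B: "\<forall>i\<in>I. B i \<in> Ob \<and> ramsey_obstruction Ob Hom cmp (A i) (k i) (t i) (B i)"
    by metis
  then have "B ` I \<subseteq> Ob" by auto
  then obtain C where C: "C \<in> Ob" and to_C: "\<forall>i\<in>I. Hom (B i) C \<noteq> {}"
    by (rule directed_finite_upper_bound[OF cat dir \<open>Ob \<noteq> {}\<close> \<open>finite I\<close>])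
  have "ramsey_obstruction Ob Hom cmp (A i) (k i) (t i) C" if i: "i \<in> I" for i
  proof -
    from to_C i obtain h where "h \<in> Hom (B i) C" by blast
    then show ?thesis
      using ramsey_obstruction_mono[OF cat _ _ C] A B i by blast
  qed
  with C that show thesis by blast
qed

lemma card_image_UN_shifted:
  fixes \<chi> :: "'a \<Rightarrow> nat" and c :: "nat \<Rightarrow> 'a \<Rightarrow> nat"
  assumes "finite I"
    and \<chi>: "\<And>i e. i \<in> I \<Longrightarrow> e \<in> S i \<Longrightarrow> \<chi> e = i * M + c i e"
    and c: "\<And>i e. i \<in> I \<Longrightarrow> e \<in> S i \<Longrightarrow> c i e < M"
  shows "card (\<chi> ` (\<Union>i\<in>I. S i)) = (\<Sum>i\<in>I. card (c i ` S i))"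
proof -
  define T where "T i = (\<lambda>x. i * M + x) ` c i ` S i" for i
  have "\<chi> ` (\<Union>i\<in>I. S i) = (\<Union>i\<in>I. T i)"
    unfolding T_def using \<chi> by (auto simp: image_UN image_image)
  moreover have "finite (T i)" if "i \<in> I" for i
  proof -
    have "c i ` S i \<subseteq> {..<M}" using c that by auto
    then show ?thesis unfolding T_def by (simp add: finite_subset)
  qed
  moreover have "T i \<inter> T j = {}" if "i \<in> I" "j \<in> I" "i \<noteq> j" for i j
  proof -
    have "x div M = i" if "i \<in> I" "x \<in> T i" for i x
    proof -
      from \<open>x \<in> T i\<close> obtain e where "e \<in> S i" and x: "x = i * M + c i e"
        unfolding T_def by blast
      with c \<open>i \<in> I\<close> have "c i e < M" by blast
      with x show ?thesis by simp
    qed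
    with \<open>i \<in> I\<close> \<open>j \<in> I\<close> \<open>i \<noteq> j\<close> show ?thesis by blast
  qed
  moreover have "card (T i) = card (c i ` S i)" for i
    unfolding T_def by (rule card_image) (simp add: inj_on_def)
  ultimately show ?thesis
    using \<open>finite I\<close> by (simp add: card_UN_disjoint)
qed

lemma unique_restriction_eq:
  assumes ex: "expansion Ob Hom cmp idm ObS HomS U" and ur: "unique_restrictions Ob Hom ObS HomS U"
    and "P \<in> ObS" "P' \<in> ObS" "Q \<in> ObS" "U P' = U P" "e \<in> HomS P Q" "e \<in> HomS P' Q"
  shows "P' = P"
proof -
  have "U P \<in> Ob" and "e \<in> Hom (U P) (U Q)"
    using ex assms(3-) unfolding expansion_def by blast+
  with ur \<open>Q \<in> ObS\<close> have "\<exists>!R. R \<in> ObS \<and> U R = U P \<and> e \<in> HomS R Q"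
    unfolding unique_restrictions_def by blast
  with assms(3-) show ?thesis by blast
qed

lemma expansion_property_copy:
  fixes HomS :: "'p \<Rightarrow> 'p \<Rightarrow> 'm set"
  assumes ex: "expansion Ob Hom cmp idm ObS HomS U" and ur: "unique_restrictions Ob Hom ObS HomS U"
    and B: "B \<in> ObS" and D: "D \<in> Ob"
    and B_to_D: "\<forall>P\<in>ObS. \<forall>Q\<in>ObS. U P = U B \<longrightarrow> U Q = D \<longrightarrow> HomS P Q \<noteq> {}"
    and C: "C \<in> ObS" and w: "w \<in> Hom D (U C)"
  obtains v where "v \<in> HomS B C" "\<And>P. P \<in> ObS \<Longrightarrow> cmp v ` HomS P B \<subseteq> cmp w ` Hom (U P) D"
proof -
  have catS: "category ObS HomS cmp (\<lambda>P. idm (U P))"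
    and sub: "\<forall>P\<in>ObS. \<forall>Q\<in>ObS. HomS P Q \<subseteq> Hom (U P) (U Q)"
    using ex unfolding expansion_def by auto
  from ur C D w obtain D' where D': "D' \<in> ObS" "U D' = D" and w': "w \<in> HomS D' C"
    unfolding unique_restrictions_def by blast
  from B_to_D B D' obtain g where g: "g \<in> HomS B D'" by blast
  show thesis
  proof (rule that)
    show "cmp w g \<in> HomS B C" using category_comp_closed[OF catS B D'(1) C g w'] .
  next
    fix P assume P: "P \<in> ObS"
    have "cmp (cmp w g) f \<in> cmp w ` Hom (U P) D" if f: "f \<in> HomS P B" for f
    proof -
      have "cmp (cmp w g) f = cmp w (cmp g f)"
        using category_assoc[OF catS P B D'(1) C f g w'] by simp
      moreover have "cmp g f \<in> Hom (U P) D"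
        using category_comp_closed[OF catS P B D'(1) f g] sub P D' by blast
      ultimately show ?thesis by blast
    qed
    then show "cmp (cmp w g) ` HomS P B \<subseteq> cmp w ` Hom (U P) D" by blast
  qed
qed

lemma enat_le_small_ramsey_degreeI:
  assumes "\<And>s. 0 < s \<Longrightarrow> ramsey_property_deg Ob Hom cmp A s \<Longrightarrow> t \<le> s"
  shows "enat t \<le> small_ramsey_degree Ob Hom cmp A"
  unfolding small_ramsey_degree_def
  using assms LeastI_ex[of "\<lambda>n. 0 < n \<and> ramsey_property_deg Ob Hom cmp A n"] by auto

lemma colouring_by_restrictions:
  fixes HomS :: "'p \<Rightarrow> 'p \<Rightarrow> 'm set" and c :: "nat \<Rightarrow> 'm \<Rightarrow> nat"
  assumes ex: "expansion Ob Hom cmp idm ObS HomS U" and ur: "unique_restrictions Ob Hom ObS HomS U"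
    and "finite I" and P: "\<forall>i\<in>I. P i \<in> ObS \<and> U (P i) = A" and "inj_on P I" and C: "C \<in> ObS"
    and c: "\<And>i e. i \<in> I \<Longrightarrow> e \<in> HomS (P i) C \<Longrightarrow> c i e < M"
  obtains \<chi> :: "'m \<Rightarrow> nat" where "\<And>e. \<chi> e \<le> ((\<Sum>i\<in>I. i) + 1) * M"
    and "\<And>i e. i \<in> I \<Longrightarrow> e \<in> HomS (P i) C \<Longrightarrow> \<chi> e = i * M + c i e"
proof -
  have index_unique: "j = i" if "i \<in> I" "j \<in> I" "e \<in> HomS (P i) C" "e \<in> HomS (P j) C" for i j e
    using unique_restriction_eq[OF ex ur _ _ C] P \<open>inj_on P I\<close> that
    by (metis inj_on_contraD)
  define index where "index e = (THE i. i \<in> I \<and> e \<in> HomS (P i) C)" for e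
  have index: "index e = i" if "i \<in> I" "e \<in> HomS (P i) C" for i e
    unfolding index_def using index_unique that by blast
  define \<chi> where "\<chi> e = (if \<exists>i\<in>I. e \<in> HomS (P i) C then index e * M + c (index e) e else 0)" for e
  show thesis
  proof (rule that)
    show "\<chi> e = i * M + c i e" if "i \<in> I" "e \<in> HomS (P i) C" for i e
      unfolding \<chi>_def using index that by auto
  next
    fix e
    show "\<chi> e \<le> ((\<Sum>i\<in>I. i) + 1) * M"
    proof (cases "\<exists>i\<in>I. e \<in> HomS (P i) C")
      case True
      then obtain i where i: "i \<in> I" "e \<in> HomS (P i) C" by blast
      have "i * M + c i e \<le> (i + 1) * M" using c[OF i] by simp
      also have "\<dots> \<le> ((\<Sum>i\<in>I. i) + 1) * M"
        using member_le_sum[of i I "\<lambda>i. i"] \<open>finite I\<close> i by simp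
      finally show ?thesis unfolding \<chi>_def using True index[OF i] by simp
    qed (simp add: \<chi>_def)
  qed
qed

lemma combine_ramsey_obstructions:
  fixes HomS :: "'p \<Rightarrow> 'p \<Rightarrow> 'm set" and I :: "nat set"
  assumes ex: "expansion Ob Hom cmp idm ObS HomS U" and ur: "unique_restrictions Ob Hom ObS HomS U"
    and "finite I" and P: "\<forall>i\<in>I. P i \<in> ObS \<and> U (P i) = A" and "inj_on P I"
    and B: "B \<in> ObS" and obs: "\<forall>i\<in>I. ramsey_obstruction ObS HomS cmp (P i) (k i) (t i) B"
    and C: "C \<in> ObS"
  obtains \<chi> :: "'m \<Rightarrow> nat" where "\<And>e. \<chi> e \<le> ((\<Sum>i\<in>I. i) + 1) * (\<Sum>i\<in>I. k i)"
    and "\<And>v. v \<in> HomS B C \<Longrightarrow> (\<Sum>i\<in>I. t i) \<le> card (\<chi> ` (\<Union>i\<in>I. cmp v ` HomS (P i) B))"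
proof -
  have catS: "category ObS HomS cmp (\<lambda>P. idm (U P))"
    using ex unfolding expansion_def by auto
  define M where "M = (\<Sum>i\<in>I. k i)"
  have "\<forall>i\<in>I. \<exists>c :: 'm \<Rightarrow> nat. (\<forall>e\<in>HomS (P i) C. c e < k i) \<and>
      (\<forall>v\<in>HomS B C. t i \<le> card (c ` cmp v ` HomS (P i) B))"
    using obs C unfolding ramsey_obstruction_def by blast
  then obtain c where c_bounded: "\<forall>i\<in>I. \<forall>e\<in>HomS (P i) C. c i e < k i"
    and c_many: "\<forall>i\<in>I. \<forall>v\<in>HomS B C. t i \<le> card (c i ` cmp v ` HomS (P i) B)"
    by metis
  have c_less_M: "c i e < M" if "i \<in> I" "e \<in> HomS (P i) C" for i e
    using c_bounded that member_le_sum[of i I k] \<open>finite I\<close> unfolding M_def by fastforce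
  obtain \<chi> :: "'m \<Rightarrow> nat" where \<chi>_bounded: "\<And>e. \<chi> e \<le> ((\<Sum>i\<in>I. i) + 1) * M"
    and \<chi>: "\<And>i e. i \<in> I \<Longrightarrow> e \<in> HomS (P i) C \<Longrightarrow> \<chi> e = i * M + c i e"
    using colouring_by_restrictions[OF ex ur \<open>finite I\<close> P \<open>inj_on P I\<close> C, of c M] c_less_M by blast
  show thesis
  proof (rule that)
    show "\<chi> e \<le> ((\<Sum>i\<in>I. i) + 1) * (\<Sum>i\<in>I. k i)" for e
      using \<chi>_bounded unfolding M_def .
  next
    fix v assume v: "v \<in> HomS B C"
    have S: "cmp v ` HomS (P i) B \<subseteq> HomS (P i) C" if "i \<in> I" for i
      using category_comp_closed[OF catS _ B C _ v] P that by blast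
    have "(\<Sum>i\<in>I. t i) \<le> (\<Sum>i\<in>I. card (c i ` cmp v ` HomS (P i) B))"
      using c_many v by (intro sum_mono) blast
    also have "\<dots> = card (\<chi> ` (\<Union>i\<in>I. cmp v ` HomS (P i) B))"
    proof (rule card_image_UN_shifted[symmetric, OF \<open>finite I\<close>])
      show "\<chi> e = i * M + c i e" and "c i e < M" if "i \<in> I" "e \<in> cmp v ` HomS (P i) B" for i e
        using \<chi> c_less_M S that by blast+
    qed
    finally show "(\<Sum>i\<in>I. t i) \<le> card (\<chi> ` (\<Union>i\<in>I. cmp v ` HomS (P i) B))" .
  qed
qed

lemma sum_ramsey_obstructions_le:
  fixes Hom :: "'o \<Rightarrow> 'o \<Rightarrow> 'm set" and HomS :: "'p \<Rightarrow> 'p \<Rightarrow> 'm set" and I :: "nat set"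
  assumes ex: "expansion Ob Hom cmp idm ObS HomS U" and ur: "unique_restrictions Ob Hom ObS HomS U"
    and ep: "expansion_property Ob ObS HomS U"
    and "finite I" and P: "\<forall>i\<in>I. P i \<in> ObS \<and> U (P i) = A" and "inj_on P I"
    and B: "B \<in> ObS" and obs: "\<forall>i\<in>I. ramsey_obstruction ObS HomS cmp (P i) (k i) (t i) B"
    and ramsey: "ramsey_property_deg Ob Hom cmp A s"
  shows "(\<Sum>i\<in>I. t i) \<le> s"
proof -
  have UOb: "U ` ObS = Ob"
    using ex unfolding expansion_def by auto
  define K where "K = ((\<Sum>i\<in>I. i) + 1) * (\<Sum>i\<in>I. k i) + 2"
  obtain D where D: "D \<in> Ob"
    and B_to_D: "\<forall>P\<in>ObS. \<forall>Q\<in>ObS. U P = U B \<longrightarrow> U Q = D \<longrightarrow> HomS P Q \<noteq> {}"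
    using ep B UOb unfolding expansion_property_def by blast
  have "K \<ge> 2" unfolding K_def by simp
  with ramsey D obtain C\<^sub>0 where "C\<^sub>0 \<in> Ob" "ramsey_arrow Hom cmp C\<^sub>0 D A K s"
    unfolding ramsey_property_deg_def by blast
  with UOb obtain C where C: "C \<in> ObS" and arrow: "ramsey_arrow Hom cmp (U C) D A K s"
    by blast
  obtain \<chi> :: "'m \<Rightarrow> nat" where \<chi>_bounded: "\<And>e. \<chi> e \<le> ((\<Sum>i\<in>I. i) + 1) * (\<Sum>i\<in>I. k i)"
    and \<chi>_many: "\<And>v. v \<in> HomS B C \<Longrightarrow> (\<Sum>i\<in>I. t i) \<le> card (\<chi> ` (\<Union>i\<in>I. cmp v ` HomS (P i) B))"
    using combine_ramsey_obstructions[OF ex ur \<open>finite I\<close> P \<open>inj_on P I\<close> B obs C] by blast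
  have \<chi>_less_K: "\<chi> e < K" for e
    using \<chi>_bounded[of e] unfolding K_def by linarith
  with arrow obtain w where w: "w \<in> Hom D (U C)" and few: "card (\<chi> ` cmp w ` Hom A D) \<le> s"
    unfolding ramsey_arrow_def by blast
  obtain v where v: "v \<in> HomS B C"
    and v_in_w: "\<And>Q. Q \<in> ObS \<Longrightarrow> cmp v ` HomS Q B \<subseteq> cmp w ` Hom (U Q) D"
    using expansion_property_copy[OF ex ur B D B_to_D C w] by blast
  have "(\<Sum>i\<in>I. t i) \<le> card (\<chi> ` (\<Union>i\<in>I. cmp v ` HomS (P i) B))"
    using \<chi>_many[OF v] .
  also have "\<dots> \<le> card (\<chi> ` cmp w ` Hom A D)"
  proof (rule card_mono)
    show "finite (\<chi> ` cmp w ` Hom A D)"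
      using \<chi>_less_K by (auto intro: finite_subset[OF _ finite_lessThan[of K]])
    show "\<chi> ` (\<Union>i\<in>I. cmp v ` HomS (P i) B) \<subseteq> \<chi> ` cmp w ` Hom A D"
      using v_in_w P by fastforce
  qed
  also have "\<dots> \<le> s" by (fact few)
  finally show ?thesis .
qed

theorem lemma6p2:
  fixes Ob :: "'o set" and Hom :: "'o \<Rightarrow> 'o \<Rightarrow> 'm set" and cmp :: "'m \<Rightarrow> 'm \<Rightarrow> 'm"
    and idm :: "'o \<Rightarrow> 'm" and ObS :: "'p set" and HomS :: "'p \<Rightarrow> 'p \<Rightarrow> 'm set"
    and U :: "'p \<Rightarrow> 'o" and A :: 'o and n :: nat and \<A> :: "nat \<Rightarrow> 'p"
  assumes "expansion Ob Hom cmp idm ObS HomS U"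
    and "reasonable Ob Hom ObS HomS U"
    and "unique_restrictions Ob Hom ObS HomS U"
    and "expansion_property Ob ObS HomS U"
    and "all_mono Ob Hom cmp"
    and "directed ObS HomS"
    and "A \<in> Ob"
    and "\<forall>i\<in>{1..n}. \<A> i \<in> ObS \<and> U (\<A> i) = A"
    and "inj_on \<A> {1..n}"
    and "\<forall>i\<in>{1..n}. small_ramsey_degree ObS HomS cmp (\<A> i) \<noteq> \<infinity>"
  shows "(\<Sum>i\<in>{1..n}. small_ramsey_degree ObS HomS cmp (\<A> i))
           \<le> small_ramsey_degree Ob Hom cmp A"
proof -
  note ex = assms(1) and ur = assms(3) and ep = assms(4) and dir = assms(6)
    and \<A> = assms(8) and inj = assms(9)
  have catS: "category ObS HomS cmp (\<lambda>P. idm (U P))" and "ObS \<noteq> {}"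
    using ex \<open>A \<in> Ob\<close> unfolding expansion_def by auto
  have "\<forall>i\<in>{1..n}. \<exists>m. small_ramsey_degree ObS HomS cmp (\<A> i) = enat m"
    using assms(10) by simp
  then have "\<exists>t. \<forall>i\<in>{1..n}. small_ramsey_degree ObS HomS cmp (\<A> i) = enat (t i)"
    by (rule bchoice)
  then obtain t where t: "\<forall>i\<in>{1..n}. small_ramsey_degree ObS HomS cmp (\<A> i) = enat (t i)"
    by blast
  have "\<forall>i\<in>{1..n}. \<A> i \<in> ObS \<and> small_ramsey_degree ObS HomS cmp (\<A> i) = enat (t i)"
    using \<A> t by simp
  then obtain k B where B: "B \<in> ObS"
    and obs: "\<forall>i\<in>{1..n}. ramsey_obstruction ObS HomS cmp (\<A> i) (k i) (t i) B"
    by (rule common_ramsey_obstruction[OF catS dir \<open>ObS \<noteq> {}\<close> finite_atLeastAtMost])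
  have "(\<Sum>i\<in>{1..n}. small_ramsey_degree ObS HomS cmp (\<A> i)) = enat (\<Sum>i\<in>{1..n}. t i)"
    using t by (simp add: of_nat_eq_enat[symmetric])
  also have "\<dots> \<le> small_ramsey_degree Ob Hom cmp A"
    by (rule enat_le_small_ramsey_degreeI, rule sum_ramsey_obstructions_le[OF ex ur ep _ \<A> inj B obs])
      simp
  finally show ?thesis .
qed

end
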